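(* Let $\hat{\mathbb{K}}_0\subseteq\cdots\subseteq\hat{\mathbb{K}}_m$ be the filtration produced by the active small coning construction from a tower, presented as an input stream as described below, and run the streaming reduction algorithm described below on it. Then the algorithm computes the correct barcode: the reported pairs $(\ell,j)$ are exactly the pivot pairs (pivot row, column) of a reduction of the boundary matrix of the filtration (with simplices ordered as in the stream), i.e., the pairs given by the standard persistence algorithm.
   Context: Active small coning construction: from a tower of elementary inclusions ($\mathbb{K}_{i+1}=\mathbb{K}_i\cup\{\sigma\}$) and elementary contractions of two vertices, one builds $\hat{\mathbb{K}}_0=\emptyset\subseteq\hat{\mathbb{K}}_1\subseteq\cdots$, with vertices flagged active/inactive (a simplex is active iff all its vertices are); an inclusion adds $\sigma$ (new vertices active); a contraction of $u,v$ adds $\{\{v\}\cup\tau:\tau\in\mathrm{Act}\overline{\mathrm{St}}(u,\hat{\mathbb{K}}_i)\}$ and marks $u$ inactive if $|\mathrm{Act}\overline{\mathrm{St}}(u,\hat{\mathbb{K}}_i)|\le|\mathrm{Act}\overline{\mathrm{St}}(v,\hat{\mathbb{K}}_i)|$ (symmetric otherwise), where $\mathrm{Act}\overline{\mathrm{St}}(w,\hat{\mathbb{K}}_i)$ is the set of active simplices of $\hat{\mathbb{K}}_i$ in the closed star of $w$. Inactive vertices never gain new cofaces. Input stream: elements (ADDITION, $\sigma$, list of facets of $\sigma$) listing the simplices of $\hat{\mathbb{K}}_{i+1}\setminus\hat{\mathbb{K}}_i$ in increasing dimension for $i=0,1,\dots$, and elements (INACTIVE, $\sigma$) signalling that $\sigma$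 has become inactive; after such an element no later added simplex has $\sigma$ as a facet. Simplices are indexed by their position in the stream. Boundary matrix over $\mathbb{Z}_2$: column $j$ has a $1$ in row $i$ iff simplex $i$ is a facet of simplex $j$; the pivot of a nonzero column is its largest nonzero row index; a reduction is a matrix obtained by left-to-right column additions with no two nonzero columns sharing a pivot. A simplex is negative if its column in a reduction is nonzero, positive otherwise. Algorithm: keep a matrix $M$ as a dictionary of columns (sorted lists of row indices). Subroutine reduce_column($j$): delete from column $j$ each row index $i$ that is inactive and negative; then, while column $j$ is nonzero and its pivot equals the pivot of another column $k<j$ of $M$, add column $k$ to column $j$. Subroutine remove_row($\ell$): let $j$ be the column of $M$ with pivot $\ell$; for every other nonzero column $i$ of $M$ with a nonzero entry in row $\ell$, add column $j$ to column $i$; then remove column $j$ from $M$. Main loop: on (ADDITION, $j$, facets), insert column $j$ into $M$ and call reduce_column($j$); if column $j$ is zero remove it from $M$; otherwise, with pivot $\ell$, report $(\ell,j)$ and if $\ell$ is inactive call remove_row($\ell$). On (INACTIVE, $\ell$), if $\ell$ is the pivot of some column of $M$, call remove_row($\ell$). *)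

theory Defs
  imports Main "HOL-Library.While_Combinator"
begin

text \<open>Simplices are finite nonempty sets of vertices of type 'v.\<close>

datatype 'v tower_op = Incl "'v set" | Contr 'v 'v

text \<open>State: (tower complex K_i, coned complex Khat_i, set of active vertices).\<close>
type_synonym 'v cstate = "'v set set \<times> 'v set set \<times> 'v set"

definition is_facet :: "'v set \<Rightarrow> 'v set \<Rightarrow> bool" where
  "is_facet \<tau> \<sigma> \<longleftrightarrow> \<tau> \<noteq> {} \<and> \<tau> \<subseteq> \<sigma> \<and> finite \<sigma> \<and> card \<tau> + 1 = card \<sigma>"

definition is_active :: "'v set \<Rightarrow> 'v set \<Rightarrow> bool" where
  "is_active A \<sigma> \<longleftrightarrow> \<sigma> \<subseteq> A"

definition act_star :: "'v set set \<Rightarrow> 'v set \<Rightarrow> 'v \<Rightarrow> 'v set set" where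
  "act_star Kh A w = {\<tau> \<in> Kh. insert w \<tau> \<in> Kh \<and> is_active A \<tau>}"

text \<open>Validity of an elementary operation on the current tower complex K
  (elementary inclusion: sigma is new and all its facets are present; new vertices
  are fresh names; elementary contraction: two distinct vertices of K).\<close>
fun valid_op :: "'v cstate \<Rightarrow> 'v tower_op \<Rightarrow> bool" where
  "valid_op (K, Kh, A) (Incl \<sigma>) \<longleftrightarrow>
     finite \<sigma> \<and> \<sigma> \<noteq> {} \<and> \<sigma> \<notin> K \<and>
     (\<forall>\<tau>. is_facet \<tau> \<sigma> \<longrightarrow> \<tau> \<in> K) \<and>
     (\<forall>x\<in>\<sigma>. x \<notin> \<Union>K \<longrightarrow> x \<notin> \<Union>Kh)"
| "valid_op (K, Kh, A) (Contr u v) \<longleftrightarrow> u \<noteq> v \<and> {u} \<in> K \<and> {v} \<in> K"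

text \<open>For a contraction of u and v, the vertex a with the smaller active closed star
  (u in case of a tie) is coned to the other vertex b and becomes inactive; in the
  tower, a is mapped to b.\<close>
fun cstep :: "'v cstate \<Rightarrow> 'v tower_op \<Rightarrow> 'v cstate" where
  "cstep (K, Kh, A) (Incl \<sigma>) = (K \<union> {\<sigma>}, Kh \<union> {\<sigma>}, A \<union> (\<sigma> - \<Union>Kh))"
| "cstep (K, Kh, A) (Contr u v) =
     (let (a, b) = (if card (act_star Kh A u) \<le> card (act_star Kh A v) then (u, v) else (v, u))
      in ((\<lambda>\<tau>. (\<lambda>x. if x = a then b else x) ` \<tau>) ` K,
          Kh \<union> {insert b \<tau> | \<tau>. \<tau> \<in> act_star Kh A a},
          A - {a}))"

definition cstates :: "'v tower_op list \<Rightarrow> nat \<Rightarrow> 'v cstate" where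
  "cstates ops i = foldl cstep ({}, {}, {}) (take i ops)"

definition valid_tower :: "'v tower_op list \<Rightarrow> bool" where
  "valid_tower ops \<longleftrightarrow> (\<forall>i < length ops. valid_op (cstates ops i) (ops ! i))"

definition Khat :: "'v tower_op list \<Rightarrow> nat \<Rightarrow> 'v set set" where
  "Khat ops i = fst (snd (cstates ops i))"

definition Act :: "'v tower_op list \<Rightarrow> nat \<Rightarrow> 'v set" where
  "Act ops i = snd (snd (cstates ops i))"

text \<open>Simplices that become inactive during step i (including simplices that are
  inactive already when added).\<close>
definition newly_inactive :: "'v tower_op list \<Rightarrow> nat \<Rightarrow> 'v set set" where
  "newly_inactive ops i =
     {\<sigma> \<in> Khat ops (Suc i). \<not> is_active (Act ops (Suc i)) \<sigma> \<and>
        (\<sigma> \<notin> Khat ops i \<or> is_active (Act ops i) \<sigma>)}"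

datatype 'v lelem = LAdd "'v set" | LInact "'v set"

definition labelled_stream :: "'v tower_op list \<Rightarrow> 'v lelem list \<Rightarrow> bool" where
  "labelled_stream ops ls \<longleftrightarrow>
     (\<exists>adds inacts :: nat \<Rightarrow> 'v set list.
        (\<forall>i < length ops.
           distinct (adds i) \<and> set (adds i) = Khat ops (Suc i) - Khat ops i \<and>
           sorted (map card (adds i)) \<and>
           distinct (inacts i) \<and> set (inacts i) = newly_inactive ops i) \<and>
        ls = concat (map (\<lambda>i. map LAdd (adds i) @ map LInact (inacts i)) [0..<length ops]))"

text \<open>The input stream as seen by the algorithm; simplices are indexed by
  position in the stream.\<close>
datatype selem = ADDITION nat "nat list" | INACTIVE nat

definition stream_of :: "'v lelem list \<Rightarrow> selem list \<Rightarrow> bool" where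
  "stream_of ls str \<longleftrightarrow> length str = length ls \<and>
     (\<forall>p < length ls.
        (\<forall>\<sigma>. ls ! p = LAdd \<sigma> \<longrightarrow>
           (\<exists>fs. str ! p = ADDITION p fs \<and> distinct fs \<and>
                 set fs = {q. q < length ls \<and> (\<exists>\<tau>. ls ! q = LAdd \<tau> \<and> is_facet \<tau> \<sigma>)})) \<and>
        (\<forall>\<sigma>. ls ! p = LInact \<sigma> \<longrightarrow>
           (\<exists>q < length ls. ls ! q = LAdd \<sigma> \<and> str ! p = INACTIVE q)))"

text \<open>Matrices over Z_2 are given by their columns, each column being the set of
  rows with a nonzero entry.\<close>
definition boundary :: "'v lelem list \<Rightarrow> nat \<Rightarrow> nat set" where
  "boundary ls j = {i. i < length ls \<and> j < length ls \<and>
      (\<exists>\<tau> \<sigma>. ls ! i = LAdd \<tau> \<and> ls ! j = LAdd \<sigma> \<and> is_facet \<tau> \<sigma>)}"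

definition zsum :: "nat set \<Rightarrow> (nat \<Rightarrow> nat set) \<Rightarrow> nat set" where
  "zsum S C = {i. odd (card {k \<in> S. i \<in> C k})}"

definition pivot :: "nat set \<Rightarrow> nat" where
  "pivot c = Max c"

definition is_reduction :: "nat \<Rightarrow> (nat \<Rightarrow> nat set) \<Rightarrow> (nat \<Rightarrow> nat set) \<Rightarrow> bool" where
  "is_reduction N D R \<longleftrightarrow>
     (\<forall>j < N. \<exists>S. S \<subseteq> {..<j} \<and> R j = D j \<union> zsum S D - (D j \<inter> zsum S D)) \<and>
     (\<forall>j < N. \<forall>k < N. j \<noteq> k \<and> R j \<noteq> {} \<and> R k \<noteq> {} \<longrightarrow> pivot (R j) \<noteq> pivot (R k))"

definition pivot_pairs :: "nat \<Rightarrow> (nat \<Rightarrow> nat set) \<Rightarrow> (nat \<times> nat) set" where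
  "pivot_pairs N R = {(pivot (R j), j) | j. j < N \<and> R j \<noteq> {}}"

type_synonym matrix = "nat \<Rightarrow> nat set option"

definition zadd :: "nat set \<Rightarrow> nat set \<Rightarrow> nat set" where
  "zadd a b = (a - b) \<union> (b - a)"

definition has_pivot :: "matrix \<Rightarrow> nat \<Rightarrow> nat \<Rightarrow> bool" where
  "has_pivot M k l \<longleftrightarrow> (\<exists>c. M k = Some c \<and> c \<noteq> {} \<and> pivot c = l)"

text \<open>reduce_column(j) on the current content c of column j; Inact = simplices
  signalled inactive so far, Neg = simplices found negative so far.\<close>
definition reduce_column :: "matrix \<Rightarrow> nat set \<Rightarrow> nat set \<Rightarrow> nat \<Rightarrow> nat set \<Rightarrow> nat set" where
  "reduce_column M Inact Neg j c =
     while (\<lambda>c. c \<noteq> {} \<and> (\<exists>k < j. has_pivot M k (pivot c)))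
           (\<lambda>c. zadd c (the (M (SOME k. k < j \<and> has_pivot M k (pivot c)))))
           (c - (Inact \<inter> Neg))"

definition remove_row :: "matrix \<Rightarrow> nat \<Rightarrow> matrix" where
  "remove_row M l =
     (let j = (SOME j. has_pivot M j l); cj = the (M j) in
      (\<lambda>i. if i = j then None else
             (case M i of None \<Rightarrow> None
              | Some c \<Rightarrow> if c \<noteq> {} \<and> l \<in> c then Some (zadd c cj) else Some c)))"

text \<open>Algorithm state: matrix M, inactive indices, negative indices, reported pairs.\<close>
type_synonym astate = "matrix \<times> nat set \<times> nat set \<times> (nat \<times> nat) list"

fun process :: "astate \<Rightarrow> selem \<Rightarrow> astate" where
  "process (M, I, N, out) (ADDITION j fs) =
     (let c = reduce_column (M(j \<mapsto> set fs)) I N j (set fs) in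
      if c = {} then (M(j := None), I, N, out)
      else (let l = pivot c; M1 = M(j \<mapsto> c) in
            (if l \<in> I then remove_row M1 l else M1, I, insert j N, out @ [(l, j)])))"
| "process (M, I, N, out) (INACTIVE l) =
     (if (\<exists>j. has_pivot M j l) then remove_row M l else M, insert l I, N, out)"

definition run_algorithm :: "selem list \<Rightarrow> (nat \<times> nat) list" where
  "run_algorithm str = snd (snd (snd (foldl process (Map.empty, {}, {}, []) str)))"

end

theory Submission
  imports Defs
begin

text \<open>
  The reduction is read off the run itself: R j is column j as it leaves reduce_column at step j
  (empty for INACTIVE elements). The rows reduce_column deletes are inactive simplices, which
  never occur in later boundaries: an inactive simplex contains an inactive vertex, and inactive
  vertices never gain cofaces. Hence R j is column j of the boundary matrix plus earlier columns.
  Columns kept in M change only by remove_row, which preserves their pivots; when a column with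
  inactive pivot l is dropped, row l is cleared from all stored columns, and since l occurs in no
  later boundary either, no later column can acquire pivot l. So the pivots of R are distinct.
\<close>

section \<open>Sums of columns over Z_2\<close>

lemma zadd_assoc: "zadd (zadd a b) c = zadd a (zadd b c)"
  unfolding zadd_def by blast

lemma zadd_union_minus_inter: "zadd a b = a \<union> b - (a \<inter> b)"
  unfolding zadd_def by blast

lemma zadd_empty_right [simp]: "zadd a {} = a"
  unfolding zadd_def by blast

lemma odd_card_symdiff_iff:
  assumes "finite A" "finite B"
  shows "odd (card ((A - B) \<union> (B - A))) \<longleftrightarrow> odd (card A) \<noteq> odd (card B)"
proof -
  have "card ((A - B) \<union> (B - A)) = card (A - B) + card (B - A)"
    using assms by (simp add: card_Un_disjoint Diff_Int_distrib2)
  moreover have "card A = card (A \<inter> B) + card (A - B)" "card B = card (A \<inter> B) + card (B - A)"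
    using card_Int_Diff[OF assms(1), of B] card_Int_Diff[OF assms(2), of A]
      by (simp_all add: Int_commute)
  ultimately show ?thesis by presburger
qed

lemma zsum_symdiff:
  assumes "finite S" "finite T"
  shows "zsum ((S - T) \<union> (T - S)) C = zadd (zsum S C) (zsum T C)"
proof -
  have "\<And>i. {k \<in> (S - T) \<union> (T - S). i \<in> C k} =
      ({k \<in> S. i \<in> C k} - {k \<in> T. i \<in> C k}) \<union> ({k \<in> T. i \<in> C k} - {k \<in> S. i \<in> C k})"
    by blast
  then show ?thesis
    using assms unfolding zsum_def zadd_def by (auto simp: odd_card_symdiff_iff)
qed

lemma zsum_empty [simp]: "zsum {} C = {}"
  unfolding zsum_def by simp

lemma zsum_singleton: "zsum {k} C = C k"
proof -
  have "\<And>i. {k' \<in> {k}. i \<in> C k'} = (if i \<in> C k then {k} else {})" by auto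
  then show ?thesis unfolding zsum_def by auto
qed

definition colspan :: "(nat \<Rightarrow> nat set) \<Rightarrow> nat \<Rightarrow> nat set set" where
  "colspan D n = {zsum S D | S. S \<subseteq> {..<n}}"

lemma colspan_zadd: "x \<in> colspan D n \<Longrightarrow> y \<in> colspan D n \<Longrightarrow> zadd x y \<in> colspan D n"
  unfolding colspan_def
proof clarify
  fix S T assume ST: "S \<subseteq> {..<n}" "T \<subseteq> {..<n}"
  then have "finite S" "finite T" by (auto intro: finite_subset)
  then show "\<exists>U. zadd (zsum S D) (zsum T D) = zsum U D \<and> U \<subseteq> {..<n}"
    using ST by (intro exI[of _ "(S - T) \<union> (T - S)"]) (auto simp: zsum_symdiff)
qed

lemma colspan_mono: "x \<in> colspan D n \<Longrightarrow> n \<le> m \<Longrightarrow> x \<in> colspan D m"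
  unfolding colspan_def by fastforce

lemma colspan_column: "k < n \<Longrightarrow> D k \<in> colspan D n"
  unfolding colspan_def by (intro CollectI exI[of _ "{k}"]) (auto simp: zsum_singleton)

lemma colspan_Suc: "x \<in> colspan D n \<Longrightarrow> zadd (D n) x \<in> colspan D (Suc n)"
  using colspan_zadd[OF colspan_column[of n "Suc n"] colspan_mono[of x D n "Suc n"]] by simp

lemma colspan_empty: "{} \<in> colspan D n"
  unfolding colspan_def by (intro CollectI exI[of _ "{}"]) auto

lemma zadd_same_Max:
  assumes "finite a" "finite b" "a \<noteq> {}" "b \<noteq> {}" "Max a = Max b"
  shows "zadd a b = {} \<or> Max (zadd a b) < Max a"
proof -
  have top: "Max a \<in> a" "Max a \<in> b" using assms Max_in[of a] Max_in[of b] by auto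
  have below: "x < Max a" if "x \<in> zadd a b" for x
  proof -
    from that top have "x \<in> a \<or> x \<in> b" "x \<noteq> Max a" unfolding zadd_def by auto
    moreover have "x \<le> Max a"
      using calculation(1) Max_ge[OF assms(1)] Max_ge[OF assms(2)] assms(5) by auto
    ultimately show ?thesis by simp
  qed
  have "finite (zadd a b)" using assms unfolding zadd_def by auto
  then show ?thesis using below Max_in[of "zadd a b"] by blast
qed

lemma zadd_clears_lower_row:
  assumes "finite c" "finite d" "d \<noteq> {}" "Max d = l" "l \<in> c" "Max c \<noteq> l"
  shows "zadd c d \<noteq> {} \<and> finite (zadd c d) \<and> Max (zadd c d) = Max c \<and> l \<notin> zadd c d"
proof -
  have lt: "l < Max c" using assms by (simp add: le_neq_trans)
  have "Max c \<in> c" using assms by (metis Max_in empty_iff)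
  moreover have "Max c \<notin> d" using lt assms(2,4) by (metis Max_ge not_le)
  ultimately have top: "Max c \<in> zadd c d" unfolding zadd_def by auto
  have fin: "finite (zadd c d)" using assms unfolding zadd_def by auto
  have "x \<le> Max c" if "x \<in> zadd c d" for x
  proof -
    have "x \<in> c \<or> x \<in> d" using that unfolding zadd_def by auto
    then show ?thesis using Max_ge[OF assms(1), of x] Max_ge[OF assms(2), of x] assms(4) lt by auto
  qed
  then have "Max (zadd c d) = Max c" by (rule Max_eqI[OF fin _ top])
  moreover have "l \<in> d" using assms(2,3,4) by (metis Max_in)
  ultimately show ?thesis using fin top assms(5) unfolding zadd_def by auto
qed

section \<open>The two subroutines\<close>

text \<open>The loop of reduce_column only ever adds a stored column with the same pivot, so the
  pivot strictly drops; any property of the column preserved by such additions survives.\<close>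
lemma reduce_column_invariant:
  fixes M :: matrix
  assumes fin: "\<And>k ck. k < j \<Longrightarrow> M k = Some ck \<Longrightarrow> finite ck"
    and step: "\<And>x k ck. x \<in> Q \<Longrightarrow> finite x \<Longrightarrow> x \<noteq> {} \<Longrightarrow> k < j \<Longrightarrow> M k = Some ck \<Longrightarrow>
                 ck \<noteq> {} \<Longrightarrow> pivot ck = pivot x \<Longrightarrow> zadd x ck \<in> Q"
    and init: "c - (I \<inter> Ng) \<in> Q" "finite c"
  defines "r \<equiv> reduce_column M I Ng j c"
  shows "r \<in> Q" "finite r" "r \<noteq> {} \<Longrightarrow> i < j \<Longrightarrow> \<not> has_pivot M i (pivot r)"
proof -
  define b where "b = (\<lambda>c. c \<noteq> {} \<and> (\<exists>k < j. has_pivot M k (pivot c)))"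
  define f where "f = (\<lambda>c. zadd c (the (M (SOME k. k < j \<and> has_pivot M k (pivot c)))))"
  have r: "r = while b f (c - (I \<inter> Ng))" unfolding r_def reduce_column_def b_def f_def ..
  have "(\<lambda>c. c \<in> Q \<and> finite c \<and> \<not> b c) (while b f (c - (I \<inter> Ng)))"
  proof (rule while_rule[where P = "\<lambda>c. c \<in> Q \<and> finite c"
        and r = "measure (\<lambda>c. if c = {} then 0 else Suc (Max c))"])
    fix s assume P: "s \<in> Q \<and> finite s" and bs: "b s"
    define k where "k = (SOME k. k < j \<and> has_pivot M k (pivot s))"
    have "k < j \<and> has_pivot M k (pivot s)"
      unfolding k_def using bs unfolding b_def by (metis (mono_tags, lifting) someI_ex)
    then obtain ck where k: "k < j" "M k = Some ck" "ck \<noteq> {}" "pivot ck = pivot s"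
      unfolding has_pivot_def by auto
    have fck: "finite ck" using fin k by blast
    have eq: "f s = zadd s ck" using k(2) unfolding f_def k_def[symmetric] by simp
    have sne: "s \<noteq> {}" using bs unfolding b_def by blast
    show "f s \<in> Q \<and> finite (f s)"
      unfolding eq using step[of s k ck] P sne k fck unfolding zadd_def by auto
    have "zadd s ck = {} \<or> Max (zadd s ck) < Max s"
      using zadd_same_Max[of s ck] P sne k fck unfolding pivot_def by auto
    then show "(f s, s) \<in> measure (\<lambda>c. if c = {} then 0 else Suc (Max c))"
      unfolding eq using sne by auto
  qed (use init in auto)
  then show "r \<in> Q" "finite r" "r \<noteq> {} \<Longrightarrow> i < j \<Longrightarrow> \<not> has_pivot M i (pivot r)"
    unfolding r by (auto simp: b_def)
qed

definition distinct_pivots :: "matrix \<Rightarrow> bool" where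
  "distinct_pivots M \<longleftrightarrow>
     (\<forall>k k' c c'. M k = Some c \<longrightarrow> M k' = Some c' \<longrightarrow> k \<noteq> k' \<longrightarrow> pivot c \<noteq> pivot c')"

definition row_cleared :: "matrix \<Rightarrow> nat \<Rightarrow> bool" where
  "row_cleared M l \<longleftrightarrow> (\<forall>k c. M k = Some c \<longrightarrow> l \<notin> c)"

lemma row_cleared_upd: "row_cleared M l \<Longrightarrow> l \<notin> c \<Longrightarrow> row_cleared (M(n \<mapsto> c)) l"
  unfolding row_cleared_def by simp

definition proper_columns :: "matrix \<Rightarrow> bool" where
  "proper_columns M \<longleftrightarrow> (\<forall>k c. M k = Some c \<longrightarrow> c \<noteq> {} \<and> finite c)"

lemma has_pivot_unique:
  "distinct_pivots M \<Longrightarrow> has_pivot M j l \<Longrightarrow> has_pivot M j' l \<Longrightarrow> j' = j"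
  unfolding distinct_pivots_def has_pivot_def by metis

lemma remove_row_eq:
  assumes "distinct_pivots M" "proper_columns M" "has_pivot M j l"
  shows "remove_row M l i = (if i = j then None else case M i of None \<Rightarrow> None
            | Some c \<Rightarrow> Some (if l \<in> c then zadd c (the (M j)) else c))"
proof -
  have "(SOME j. has_pivot M j l) = j"
    using assms(3) has_pivot_unique[OF assms(1,3)] by (rule some_equality)
  then show ?thesis
    using assms(2) unfolding proper_columns_def
      by (simp add: remove_row_def Let_def split: option.splits)
qed

lemma remove_row_None_iff:
  assumes "distinct_pivots M" "proper_columns M" "has_pivot M j l"
  shows "remove_row M l i = None \<longleftrightarrow> i = j \<or> M i = None"
  using remove_row_eq[OF assms] by (auto split: option.splits)

lemma remove_row_SomeD:
  assumes dist: "distinct_pivots M" and cols: "proper_columns M" and hp: "has_pivot M j l"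
    and r: "remove_row M l i = Some c'"
  obtains c where "M i = Some c" "i \<noteq> j" "c' = c \<or> c' = zadd c (the (M j))"
    "c' \<noteq> {}" "finite c'" "pivot c' = pivot c" "l \<notin> c'"
proof -
  obtain cj where cj: "M j = Some cj" "cj \<noteq> {}" "pivot cj = l"
    using hp unfolding has_pivot_def by auto
  note e = remove_row_eq[OF dist cols hp, of i]
  have ij: "i \<noteq> j" using r e by auto
  then obtain c where c: "M i = Some c" using r e by (auto split: option.splits)
  have c': "c' = (if l \<in> c then zadd c cj else c)" using r e ij c cj by auto
  have "pivot c \<noteq> l" using dist c cj ij unfolding distinct_pivots_def by metis
  then have "l \<in> c \<Longrightarrow>
      zadd c cj \<noteq> {} \<and> finite (zadd c cj) \<and> Max (zadd c cj) = Max c \<and> l \<notin> zadd c cj"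
    using cols c cj unfolding proper_columns_def pivot_def by (intro zadd_clears_lower_row) auto
  then show thesis
    using that[OF c ij] c' cj cols c unfolding proper_columns_def pivot_def by (cases "l \<in> c") auto
qed

lemma remove_row_cleared:
  assumes "distinct_pivots M" "proper_columns M" "has_pivot M j l"
  shows "row_cleared (remove_row M l) l"
  using remove_row_SomeD[OF assms] unfolding row_cleared_def by metis

lemma remove_row_keeps_cleared:
  assumes "distinct_pivots M" "proper_columns M" "has_pivot M j l" "row_cleared M l'"
  shows "row_cleared (remove_row M l) l'"
proof -
  obtain cj where "M j = Some cj" using assms(3) unfolding has_pivot_def by auto
  then show ?thesis
    using remove_row_SomeD[OF assms(1-3)] assms(4) unfolding row_cleared_def zadd_def
    by (metis Diff_iff Un_iff option.sel)
qed

section \<open>Correctness for an abstract input stream\<close>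

locale streaming_input =
  fixes D :: "nat \<Rightarrow> nat set" and str :: "selem list"
  assumes stream_elem: "p < length str \<Longrightarrow>
      (\<exists>fs. str ! p = ADDITION p fs \<and> set fs = D p) \<or> (\<exists>q. str ! p = INACTIVE q \<and> D p = {})"
    and inactive_not_later_facet: "\<lbrakk>p < p'; p' < length str; str ! p = INACTIVE q;
      str ! p' = ADDITION p' fs\<rbrakk> \<Longrightarrow> q \<notin> set fs"
begin

definition run_state :: "nat \<Rightarrow> astate" where
  "run_state n = foldl process (Map.empty, {}, {}, []) (take n str)"

text \<open>The copy of column j kept in M is later changed by remove_row, but never its pivot.\<close>
definition reduced :: "nat \<Rightarrow> nat set" where
  "reduced j = (case str ! j of
      ADDITION _ fs \<Rightarrow>
        (case run_state j of (M, I, Ng, _) \<Rightarrow> reduce_column (M(j \<mapsto> set fs)) I Ng j (set fs))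
    | INACTIVE _ \<Rightarrow> {})"

text \<open>In the fourth conjunct, a nonzero column no longer stored in M was dropped by
  remove_row, so its pivot row is inactive and has been cleared from M.\<close>
definition run_invariant :: "nat \<Rightarrow> matrix \<Rightarrow> nat set \<Rightarrow> (nat \<times> nat) list \<Rightarrow> bool" where
  "run_invariant n M I out \<longleftrightarrow>
     (\<forall>k c. M k = Some c \<longrightarrow> k < n \<and> c \<in> colspan D n \<and> pivot c = pivot (reduced k)) \<and>
     proper_columns M \<and> distinct_pivots M \<and>
     (\<forall>j<n. reduced j \<noteq> {} \<longrightarrow>
        M j \<noteq> None \<or> pivot (reduced j) \<in> I \<and> row_cleared M (pivot (reduced j))) \<and>
     (\<forall>q\<in>I. \<exists>p<n. str ! p = INACTIVE q) \<and>
     set out = {(pivot (reduced j), j) | j. j < n \<and> reduced j \<noteq> {}}"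

lemma run_invariantD:
  assumes "run_invariant n M I out"
  shows "M k = Some c \<Longrightarrow> k < n \<and> c \<in> colspan D n \<and> pivot c = pivot (reduced k)"
    and "proper_columns M" and "distinct_pivots M"
    and "j < n \<Longrightarrow> reduced j \<noteq> {} \<Longrightarrow>
      M j \<noteq> None \<or> pivot (reduced j) \<in> I \<and> row_cleared M (pivot (reduced j))"
    and "q \<in> I \<Longrightarrow> \<exists>p<n. str ! p = INACTIVE q"
    and "set out = {(pivot (reduced j), j) | j. j < n \<and> reduced j \<noteq> {}}"
  using assms unfolding run_invariant_def by blast+

lemma run_invariantI:
  assumes "\<And>k c. M k = Some c \<Longrightarrow> k < n \<and> c \<in> colspan D n \<and> pivot c = pivot (reduced k)"
    and "proper_columns M" and "distinct_pivots M"
    and "\<And>j. j < n \<Longrightarrow> reduced j \<noteq> {} \<Longrightarrow>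
      M j \<noteq> None \<or> pivot (reduced j) \<in> I \<and> row_cleared M (pivot (reduced j))"
    and "\<And>q. q \<in> I \<Longrightarrow> \<exists>p<n. str ! p = INACTIVE q"
    and "set out = {(pivot (reduced j), j) | j. j < n \<and> reduced j \<noteq> {}}"
  shows "run_invariant n M I out"
  using assms unfolding run_invariant_def by blast

lemma run_state_0: "run_state 0 = (Map.empty, {}, {}, [])"
  unfolding run_state_def by simp

lemma run_state_Suc: "n < length str \<Longrightarrow> run_state (Suc n) = process (run_state n) (str ! n)"
  unfolding run_state_def by (simp add: take_Suc_conv_app_nth)

lemma run_invariant_0: "run_invariant 0 Map.empty {} []"
  unfolding run_invariant_def proper_columns_def distinct_pivots_def by simp

lemma addition_index: "n < length str \<Longrightarrow> str ! n = ADDITION j fs \<Longrightarrow> j = n \<and> set fs = D n"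
  using stream_elem[of n] by auto

lemma run_invariant_remove_row:
  assumes inv: "run_invariant n M I out" and hp: "has_pivot M j l" and "l \<in> I"
  shows "run_invariant n (remove_row M l) I out"
proof -
  note cols = run_invariantD(2)[OF inv] and dist = run_invariantD(3)[OF inv]
  obtain cj where cj: "M j = Some cj" "pivot cj = l" using hp unfolding has_pivot_def by auto
  note removed = remove_row_SomeD[OF dist cols hp]
  show ?thesis
  proof (rule run_invariantI)
    fix k c' assume "remove_row M l k = Some c'"
    then obtain c where c: "M k = Some c" "c' = c \<or> c' = zadd c cj" "pivot c' = pivot c"
      using cj by (metis option.sel removed)
    then show "k < n \<and> c' \<in> colspan D n \<and> pivot c' = pivot (reduced k)"
      using run_invariantD(1)[OF inv c(1)] run_invariantD(1)[OF inv cj(1)] colspan_zadd by metis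
  next
    show "proper_columns (remove_row M l)"
      unfolding proper_columns_def using removed by metis
    show "distinct_pivots (remove_row M l)"
      using dist removed unfolding distinct_pivots_def by metis
  next
    fix j' assume j': "j' < n" "reduced j' \<noteq> {}"
    have "pivot (reduced j) = l" using run_invariantD(1)[OF inv cj(1)] cj(2) by simp
    then show "remove_row M l j' \<noteq> None \<or>
        pivot (reduced j') \<in> I \<and> row_cleared (remove_row M l) (pivot (reduced j'))"
      using run_invariantD(4)[OF inv j'] remove_row_None_iff[OF dist cols hp, of j']
        remove_row_cleared[OF dist cols hp] remove_row_keeps_cleared[OF dist cols hp] \<open>l \<in> I\<close>
      by metis
  qed (use run_invariantD(5,6)[OF inv] in auto)
qed

lemma run_invariant_skip:
  assumes inv: "run_invariant n M I out" and "reduced n = {}"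
    and "I' = I \<or> I' = insert q I \<and> str ! n = INACTIVE q"
  shows "run_invariant (Suc n) M I' out"
proof (rule run_invariantI)
  show "\<And>k c. M k = Some c \<Longrightarrow> k < Suc n \<and> c \<in> colspan D (Suc n) \<and> pivot c = pivot (reduced k)"
    using run_invariantD(1)[OF inv] colspan_mono[of _ D n "Suc n"] by fastforce
  show "\<And>j. j < Suc n \<Longrightarrow> reduced j \<noteq> {} \<Longrightarrow>
      M j \<noteq> None \<or> pivot (reduced j) \<in> I' \<and> row_cleared M (pivot (reduced j))"
    using run_invariantD(4)[OF inv] assms(2,3) less_Suc_eq by blast
  show "\<And>q'. q' \<in> I' \<Longrightarrow> \<exists>p<Suc n. str ! p = INACTIVE q'"
    using run_invariantD(5)[OF inv] assms(3) less_Suc_eq by blast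
  show "set out = {(pivot (reduced j), j) | j. j < Suc n \<and> reduced j \<noteq> {}}"
    using run_invariantD(6)[OF inv] assms(2) less_Suc_eq by auto
qed (use run_invariantD(2,3)[OF inv] in auto)

text \<open>Rows deleted at the start of reduce_column are inactive, hence, by the stream hypothesis,
  not in the boundary of the new simplex: the deletion does not change the column.\<close>
lemma reduced_addition:
  assumes n: "n < length str" "str ! n = ADDITION n fs"
    and s: "run_state n = (M, I, Ng, out)" and inv: "run_invariant n M I out"
  shows "reduced n = reduce_column (M(n \<mapsto> set fs)) I Ng n (set fs)"
    and "\<exists>x\<in>colspan D n. reduced n = zadd (D n) x"
    and "finite (reduced n)"
    and "reduced n \<noteq> {} \<Longrightarrow> k < n \<Longrightarrow> \<not> has_pivot M k (pivot (reduced n))"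
    and "l \<in> I \<Longrightarrow> row_cleared M l \<Longrightarrow> l \<notin> reduced n"
proof -
  have fs: "set fs = D n" using addition_index[OF n] by simp
  have inactive_not_in_fs: "l \<notin> set fs" if "l \<in> I" for l
    using run_invariantD(5)[OF inv that] inactive_not_later_facet[OF _ n(1) _ n(2)] by blast
  show r: "reduced n = reduce_column (M(n \<mapsto> set fs)) I Ng n (set fs)"
    unfolding reduced_def using n(2) s by simp
  define Q where "Q = {y. (\<exists>x\<in>colspan D n. y = zadd (D n) x) \<and> (\<forall>l\<in>I. row_cleared M l \<longrightarrow> l \<notin> y)}"
  have fin: "finite ck" if "k < n" "(M(n \<mapsto> set fs)) k = Some ck" for k ck
    using that run_invariantD(2)[OF inv] unfolding proper_columns_def by auto
  have step: "zadd x ck \<in> Q"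
    if x: "x \<in> Q" and "finite x" "x \<noteq> {}" and k: "k < n" "(M(n \<mapsto> set fs)) k = Some ck"
      and "ck \<noteq> {}" "pivot ck = pivot x" for x k ck
  proof -
    have Mk: "M k = Some ck" using k by simp
    obtain x0 where x0: "x0 \<in> colspan D n" "x = zadd (D n) x0" using x unfolding Q_def by blast
    have "zadd x ck = zadd (D n) (zadd x0 ck)" using x0 zadd_assoc by simp
    moreover have "zadd x0 ck \<in> colspan D n"
      using x0 run_invariantD(1)[OF inv Mk] colspan_zadd by blast
    moreover have "\<forall>l\<in>I. row_cleared M l \<longrightarrow> l \<notin> zadd x ck"
      using x Mk unfolding Q_def row_cleared_def zadd_def by blast
    ultimately show "zadd x ck \<in> Q" unfolding Q_def by blast
  qed
  have "set fs - (I \<inter> Ng) = zadd (D n) {}" using inactive_not_in_fs fs by auto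
  then have init: "set fs - (I \<inter> Ng) \<in> Q"
    unfolding Q_def using inactive_not_in_fs fs by (auto intro!: bexI[OF _ colspan_empty])
  have red: "reduced n \<in> Q" "finite (reduced n)"
    unfolding r by (rule reduce_column_invariant[where Q = Q], (fact fin step init finite_set)+)+
  have no_earlier_pivot: "\<not> has_pivot (M(n \<mapsto> set fs)) k (pivot (reduced n))"
    if "reduced n \<noteq> {}" "k < n" for k
    unfolding r
      by (rule reduce_column_invariant[where Q = Q])
      (fact fin step init finite_set that[unfolded r])+
  show "finite (reduced n)" using red(2) .
  show "l \<in> I \<Longrightarrow> row_cleared M l \<Longrightarrow> l \<notin> reduced n"
    using red(1) unfolding Q_def by blast
  show "reduced n \<noteq> {} \<Longrightarrow> k < n \<Longrightarrow> \<not> has_pivot M k (pivot (reduced n))"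
    using no_earlier_pivot unfolding has_pivot_def by auto
  show "\<exists>x\<in>colspan D n. reduced n = zadd (D n) x" using red(1) unfolding Q_def by blast
qed

lemma run_invariant_add:
  assumes inv: "run_invariant n M I out" and c: "reduced n = c" "c \<noteq> {}" "c \<in> colspan D (Suc n)"
    and no_earlier_pivot: "\<And>k. k < n \<Longrightarrow> \<not> has_pivot M k (pivot c)"
    and avoids_cleared: "\<And>l. l \<in> I \<Longrightarrow> row_cleared M l \<Longrightarrow> l \<notin> c"
    and fin: "finite c"
  shows "run_invariant (Suc n) (M(n \<mapsto> c)) I (out @ [(pivot c, n)])"
proof (rule run_invariantI)
  have old: "k < n \<and> c' \<in> colspan D n \<and> pivot c' = pivot (reduced k)" if "M k = Some c'" for k c'
    using run_invariantD(1)[OF inv that] .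
  have new_pivot: "pivot c' \<noteq> pivot c" if "M k = Some c'" for k c'
    using no_earlier_pivot[of k] old[OF that] run_invariantD(2)[OF inv] that
    unfolding has_pivot_def proper_columns_def by auto
  show "k < Suc n \<and> c' \<in> colspan D (Suc n) \<and> pivot c' = pivot (reduced k)"
    if "(M(n \<mapsto> c)) k = Some c'" for k c'
  proof (cases "k = n")
    case True
    then show ?thesis using that c by simp
  next
    case False
    then show ?thesis using that old[of k c'] colspan_mono[of c' D n "Suc n"] by simp
  qed
  show "proper_columns (M(n \<mapsto> c))"
    using run_invariantD(2)[OF inv] c(2) fin unfolding proper_columns_def by auto
  show "distinct_pivots (M(n \<mapsto> c))"
    unfolding distinct_pivots_def
  proof (intro allI impI)
    fix k k' c1 c2 assume "(M(n \<mapsto> c)) k = Some c1" "(M(n \<mapsto> c)) k' = Some c2" "k \<noteq> k'"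
    then show "pivot c1 \<noteq> pivot c2"
      using run_invariantD(3)[OF inv] unfolding distinct_pivots_def
      by (cases "k = n"; cases "k' = n") (auto dest: new_pivot)
  qed
  show "(M(n \<mapsto> c)) j \<noteq> None \<or> pivot (reduced j) \<in> I \<and> row_cleared (M(n \<mapsto> c)) (pivot (reduced j))"
    if "j < Suc n" "reduced j \<noteq> {}" for j
  proof (cases "j = n")
    case False
    then have "M j \<noteq> None \<or> pivot (reduced j) \<in> I \<and> row_cleared M (pivot (reduced j))"
      using run_invariantD(4)[OF inv] that by simp
    then show ?thesis using False avoids_cleared row_cleared_upd by auto
  qed simp
  show "\<And>q. q \<in> I \<Longrightarrow> \<exists>p<Suc n. str ! p = INACTIVE q"
    using run_invariantD(5)[OF inv] less_SucI by blast
  have "{(pivot (reduced j), j) | j. j < Suc n \<and> reduced j \<noteq> {}} =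
      insert (pivot c, n) {(pivot (reduced j), j) | j. j < n \<and> reduced j \<noteq> {}}"
    using c(1,2) by (auto simp: less_Suc_eq)
  then show "set (out @ [(pivot c, n)]) = {(pivot (reduced j), j) | j. j < Suc n \<and> reduced j \<noteq> {}}"
    using run_invariantD(6)[OF inv] by simp
qed

lemma run_invariant_step:
  assumes n: "n < length str" and inv: "run_invariant n M I out"
    and s: "run_state n = (M, I, Ng, out)" and s': "run_state (Suc n) = (M', I', Ng', out')"
  shows "run_invariant (Suc n) M' I' out'"
proof -
  have step: "process (M, I, Ng, out) (str ! n) = (M', I', Ng', out')"
    using s s' run_state_Suc[OF n] by simp
  from stream_elem[OF n] show ?thesis
  proof (elim disjE exE conjE)
    fix fs assume add: "str ! n = ADDITION n fs" "set fs = D n"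
    note red = reduced_addition[OF n add(1) s inv]
    show ?thesis
    proof (cases "reduced n = {}")
      case True
      moreover have "M n = None" using run_invariantD(1)[OF inv, of n] by (cases "M n") auto
      ultimately have "(M', I', Ng', out') = (M, I, Ng, out)"
        using step add red(1) by (auto simp: fun_upd_idem)
      then show ?thesis using run_invariant_skip[OF inv True] by simp
    next
      case False
      let ?c = "reduced n"
      have added: "run_invariant (Suc n) (M(n \<mapsto> ?c)) I (out @ [(pivot ?c, n)])"
        using red(2,4,5) colspan_Suc False
          by (intro run_invariant_add[OF inv refl False _ _ _ red(3)]) auto
      have "process (M, I, Ng, out) (ADDITION n fs) =
          (if pivot ?c \<in> I then remove_row (M(n \<mapsto> ?c)) (pivot ?c) else M(n \<mapsto> ?c),
           I, insert n Ng, out @ [(pivot ?c, n)])"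
        using False unfolding red(1) by (simp add: Let_def)
      from trans[OF step[unfolded add(1), symmetric] this]
      have M': "M' = (if pivot ?c \<in> I then remove_row (M(n \<mapsto> ?c)) (pivot ?c) else M(n \<mapsto> ?c))"
        and rest: "I' = I" "out' = out @ [(pivot ?c, n)]"
        by simp_all
      have "has_pivot (M(n \<mapsto> ?c)) n (pivot ?c)" using False unfolding has_pivot_def by simp
      then show ?thesis
        unfolding M' rest using added run_invariant_remove_row[OF added] by simp
    qed
  next
    fix q assume inact: "str ! n = INACTIVE q"
    have "reduced n = {}" unfolding reduced_def using inact by simp
    then have skipped: "run_invariant (Suc n) M (insert q I) out"
      using run_invariant_skip[OF inv] inact by blast
    have "M' = (if \<exists>j. has_pivot M j q then remove_row M q else M)" "I' = insert q I" "out' = out"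
      using step[unfolded inact] by simp_all
    then show ?thesis using skipped run_invariant_remove_row[OF skipped]
      by (cases "\<exists>j. has_pivot M j q") auto
  qed
qed

lemma run_invariant_holds:
  "n \<le> length str \<Longrightarrow> run_state n = (M, I, Ng, out) \<Longrightarrow> run_invariant n M I out"
proof (induction n arbitrary: M I Ng out)
  case 0
  then show ?case using run_state_0 run_invariant_0 by simp
next
  case (Suc n)
  obtain M0 I0 Ng0 out0 where s: "run_state n = (M0, I0, Ng0, out0)" by (cases "run_state n")
  then show ?case using Suc run_invariant_step[OF _ _ s] by simp
qed

text \<open>A column j retired before step k has its pivot row cleared and inactive, so the
  column reduced at step k cannot contain that row.\<close>
lemma reduced_pivots_distinct:
  assumes jk: "j < k" "k < length str" and nonzero: "reduced j \<noteq> {}" "reduced k \<noteq> {}"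
  shows "pivot (reduced j) \<noteq> pivot (reduced k)"
proof -
  obtain fs where add: "str ! k = ADDITION k fs"
    using nonzero(2) addition_index[OF jk(2)] unfolding reduced_def by (cases "str ! k") auto
  obtain M I Ng out where s: "run_state k = (M, I, Ng, out)" by (cases "run_state k")
  have inv: "run_invariant k M I out" using run_invariant_holds[OF _ s] jk(2) by simp
  note red = reduced_addition[OF jk(2) add s inv]
  have "pivot (reduced k) \<in> reduced k" unfolding pivot_def using red(3) nonzero(2) by (rule Max_in)
  moreover have "M j = Some cj \<Longrightarrow> has_pivot M j (pivot (reduced j))" for cj
    using run_invariantD(1,2)[OF inv] unfolding has_pivot_def proper_columns_def by auto
  ultimately show ?thesis
    using run_invariantD(4)[OF inv jk(1) nonzero(1)] red(4)[OF nonzero(2) jk(1)] red(5) by auto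
qed

lemma reduced_is_reduction: "is_reduction (length str) D reduced"
  unfolding is_reduction_def
proof (intro conjI allI impI)
  fix j assume j: "j < length str"
  show "\<exists>S. S \<subseteq> {..<j} \<and> reduced j = D j \<union> zsum S D - (D j \<inter> zsum S D)"
  proof (cases "str ! j")
    case (ADDITION j' fs)
    then have add: "str ! j = ADDITION j fs" using addition_index[OF j] by simp
    obtain M I Ng out where s: "run_state j = (M, I, Ng, out)" by (cases "run_state j")
    have inv: "run_invariant j M I out" using run_invariant_holds[OF _ s] j by simp
    obtain S where "S \<subseteq> {..<j}" "reduced j = zadd (D j) (zsum S D)"
      using reduced_addition(2)[OF j add s inv] unfolding colspan_def by auto
    then show ?thesis by (intro exI[of _ S]) (simp add: zadd_union_minus_inter)
  next
    case (INACTIVE q)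
    then have "reduced j = {}" "D j = {}" using stream_elem[OF j] unfolding reduced_def by auto
    then show ?thesis by (intro exI[of _ "{}"]) simp
  qed
next
  fix j k assume "j < length str" "k < length str" "j \<noteq> k \<and> reduced j \<noteq> {} \<and> reduced k \<noteq> {}"
  then show "pivot (reduced j) \<noteq> pivot (reduced k)"
    using reduced_pivots_distinct[of j k] reduced_pivots_distinct[of k j]
    by (cases "j < k") (auto simp: not_less_iff_gr_or_eq)
qed

lemma run_algorithm_pivot_pairs: "set (run_algorithm str) = pivot_pairs (length str) reduced"
proof -
  obtain M I Ng out where s: "run_state (length str) = (M, I, Ng, out)"
    by (cases "run_state (length str)")
  then have "run_algorithm str = out" unfolding run_algorithm_def run_state_def by simp
  then show ?thesis
    using run_invariantD(6)[OF run_invariant_holds[OF _ s]] unfolding pivot_pairs_def by simp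
qed

end

section \<open>Inactive vertices never gain cofaces\<close>

lemma cstates_Suc: "i < length ops \<Longrightarrow> cstates ops (Suc i) = cstep (cstates ops i) (ops ! i)"
  unfolding cstates_def by (simp add: take_Suc_conv_app_nth)

definition coned_vertex :: "'v set set \<Rightarrow> 'v set \<Rightarrow> 'v \<Rightarrow> 'v \<Rightarrow> 'v" where
  "coned_vertex Kh A u v = (if card (act_star Kh A u) \<le> card (act_star Kh A v) then u else v)"

definition cone_apex :: "'v set set \<Rightarrow> 'v set \<Rightarrow> 'v \<Rightarrow> 'v \<Rightarrow> 'v" where
  "cone_apex Kh A u v = (if card (act_star Kh A u) \<le> card (act_star Kh A v) then v else u)"

lemma cstep_Contr_eq:
  "cstep (K, Kh, A) (Contr u v) =
     ((\<lambda>\<tau>. (\<lambda>x. if x = coned_vertex Kh A u v then cone_apex Kh A u v else x) ` \<tau>) ` K,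
      Kh \<union> {insert (cone_apex Kh A u v) \<tau> | \<tau>. \<tau> \<in> act_star Kh A (coned_vertex Kh A u v)},
      A - {coned_vertex Kh A u v})"
  unfolding coned_vertex_def cone_apex_def
  by (cases "card (act_star Kh A u) \<le> card (act_star Kh A v)") (simp_all add: Let_def)

lemma cone_apex_mem: "cone_apex Kh A u v \<in> {u, v}"
  unfolding cone_apex_def by auto

lemma coned_vertex_neq_cone_apex: "u \<noteq> v \<Longrightarrow> coned_vertex Kh A u v \<noteq> cone_apex Kh A u v"
  unfolding coned_vertex_def cone_apex_def by auto

lemma cstep_Khat_mono: "cstep (K, Kh, A) op = (K', Kh', A') \<Longrightarrow> Kh \<subseteq> Kh'"
  by (cases op) (auto simp: cstep_Contr_eq simp del: cstep.simps(2))

lemma cstep_inactive_stays: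
  "cstep (K, Kh, A) op = (K', Kh', A') \<Longrightarrow> x \<in> \<Union>Kh \<Longrightarrow> x \<notin> A \<Longrightarrow> x \<notin> A'"
  by (cases op) (auto simp: cstep_Contr_eq simp del: cstep.simps(2))

text \<open>Every vertex of the tower complex is active: contractions retire only the coned vertex,
  which disappears from the tower.\<close>
lemma cstep_tower_vertices_active:
  assumes "valid_op (K, Kh, A) op" "\<Union>K \<subseteq> A" "cstep (K, Kh, A) op = (K', Kh', A')"
  shows "\<Union>K' \<subseteq> A'"
proof (cases op)
  case (Incl \<sigma>)
  have "K' = K \<union> {\<sigma>}" "A' = A \<union> (\<sigma> - \<Union>Kh)" using assms(3) unfolding Incl by auto
  moreover have "\<forall>x\<in>\<sigma>. x \<notin> \<Union>K \<longrightarrow> x \<notin> \<Union>Kh" using assms(1) unfolding Incl by simp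
  ultimately show ?thesis using assms(2) by blast
next
  case (Contr u v)
  let ?a = "coned_vertex Kh A u v" and ?b = "cone_apex Kh A u v"
  have uv: "u \<noteq> v" "{u} \<in> K" "{v} \<in> K" using assms(1) unfolding Contr by auto
  then have ab: "?a \<noteq> ?b" "?b \<in> A"
    using assms(2) cone_apex_mem[of Kh A u v] coned_vertex_neq_cone_apex[of u v Kh A] by auto
  have K': "K' = (\<lambda>\<tau>. (\<lambda>x. if x = ?a then ?b else x) ` \<tau>) ` K" "A' = A - {?a}"
    using assms(3) unfolding Contr cstep_Contr_eq by auto
  show ?thesis
  proof
    fix y assume "y \<in> \<Union>K'"
    then obtain \<tau> x where "\<tau> \<in> K" "x \<in> \<tau>" "y = (if x = ?a then ?b else x)" unfolding K' by auto
    then show "y \<in> A'" unfolding K' using ab assms(2) by auto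
  qed
qed

lemma cstep_new_simplex_vertex_active_or_new:
  assumes "valid_op (K, Kh, A) op" "\<Union>K \<subseteq> A" "cstep (K, Kh, A) op = (K', Kh', A')"
    and "\<sigma> \<in> Kh' - Kh" "y \<in> \<sigma>"
  shows "y \<in> A \<or> y \<notin> \<Union>Kh"
proof (cases op)
  case (Incl s)
  have "Kh' = Kh \<union> {s}" using assms(3) unfolding Incl by auto
  moreover have "\<forall>x\<in>s. x \<notin> \<Union>K \<longrightarrow> x \<notin> \<Union>Kh" using assms(1) unfolding Incl by simp
  ultimately show ?thesis using assms(2,4,5) by blast
next
  case (Contr u v)
  let ?a = "coned_vertex Kh A u v" and ?b = "cone_apex Kh A u v"
  have "{u} \<in> K" "{v} \<in> K" using assms(1) unfolding Contr by auto
  then have "?b \<in> A" using assms(2) cone_apex_mem[of Kh A u v] by auto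
  moreover have "Kh' = Kh \<union> {insert ?b \<tau> | \<tau>. \<tau> \<in> act_star Kh A ?a}"
    using assms(3) unfolding Contr cstep_Contr_eq by auto
  then obtain \<tau> where "\<sigma> = insert ?b \<tau>" "\<tau> \<in> act_star Kh A ?a" using assms(4) by auto
  ultimately show ?thesis using assms(5) unfolding act_star_def is_active_def by auto
qed

lemma tower_vertices_active:
  "valid_tower ops \<Longrightarrow> i \<le> length ops \<Longrightarrow> \<Union>(fst (cstates ops i)) \<subseteq> Act ops i"
proof (induction i)
  case 0
  then show ?case unfolding cstates_def Act_def by simp
next
  case (Suc i)
  obtain K Kh A where s: "cstates ops i = (K, Kh, A)" by (cases "cstates ops i")
  obtain K' Kh' A' where s': "cstates ops (Suc i) = (K', Kh', A')" by (cases "cstates ops (Suc i)")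
  have i: "i < length ops" using Suc.prems by simp
  have "valid_op (K, Kh, A) (ops ! i)" using Suc.prems(1) i s unfolding valid_tower_def by metis
  moreover have "\<Union>K \<subseteq> A" using Suc s unfolding Act_def by simp
  ultimately show ?case
    using cstep_tower_vertices_active s s' cstates_Suc[OF i] unfolding Act_def by simp
qed

lemma inactive_vertex_persists:
  assumes "x \<in> \<Union>(Khat ops s)" "x \<notin> Act ops s" "s \<le> t" "t \<le> length ops"
  shows "x \<in> \<Union>(Khat ops t) \<and> x \<notin> Act ops t"
  using assms(3,4)
proof (induction t)
  case 0
  then show ?case using assms by simp
next
  case (Suc t)
  show ?case
  proof (cases "s = Suc t")
    case False
    then have "x \<in> \<Union>(Khat ops t)" "x \<notin> Act ops t" using Suc by simp_all
    moreover obtain K Kh A where s: "cstates ops t = (K, Kh, A)" by (cases "cstates ops t")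
    moreover obtain K' Kh' A' where s': "cstates ops (Suc t) = (K', Kh', A')"
      by (cases "cstates ops (Suc t)")
    moreover have "cstep (K, Kh, A) (ops ! t) = (K', Kh', A')"
      using s s' cstates_Suc[of t ops] Suc.prems by simp
    ultimately show ?thesis
      using cstep_Khat_mono cstep_inactive_stays unfolding Khat_def Act_def by fastforce
  qed (use assms in simp)
qed

lemma new_simplex_vertex_active_or_new:
  assumes v: "valid_tower ops" and i: "i < length ops"
    and \<sigma>: "\<sigma> \<in> Khat ops (Suc i) - Khat ops i" "y \<in> \<sigma>"
  shows "y \<in> Act ops i \<or> y \<notin> \<Union>(Khat ops i)"
proof -
  obtain K Kh A where s: "cstates ops i = (K, Kh, A)" by (cases "cstates ops i")
  obtain K' Kh' A' where s': "cstates ops (Suc i) = (K', Kh', A')" by (cases "cstates ops (Suc i)")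
  have "valid_op (K, Kh, A) (ops ! i)" using v i s unfolding valid_tower_def by metis
  moreover have "\<Union>K \<subseteq> A" using tower_vertices_active[OF v, of i] i s unfolding Act_def by simp
  moreover have "cstep (K, Kh, A) (ops ! i) = (K', Kh', A')" using s s' cstates_Suc[OF i] by simp
  moreover have "\<sigma> \<in> Kh' - Kh" using \<sigma>(1) s s' unfolding Khat_def by simp
  ultimately have "y \<in> A \<or> y \<notin> \<Union>Kh" by (rule cstep_new_simplex_vertex_active_or_new[OF _ _ _ _ \<sigma>(2)])
  then show ?thesis using s unfolding Khat_def Act_def by simp
qed

text \<open>A newly inactive simplex has an inactive vertex, which stays inactive, while every
  vertex of a simplex added later is active or brand new.\<close>
lemma newly_inactive_not_facet_of_later:
  assumes v: "valid_tower ops" and ii: "i < i'" "i' < length ops"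
    and \<tau>: "\<tau> \<in> newly_inactive ops i" and \<sigma>: "\<sigma> \<in> Khat ops (Suc i') - Khat ops i'"
  shows "\<not> is_facet \<tau> \<sigma>"
proof
  assume facet: "is_facet \<tau> \<sigma>"
  from \<tau> obtain x where x: "x \<in> \<tau>" "x \<notin> Act ops (Suc i)" "\<tau> \<in> Khat ops (Suc i)"
    unfolding newly_inactive_def is_active_def by auto
  then have "x \<in> \<Union>(Khat ops i') \<and> x \<notin> Act ops i'"
    using inactive_vertex_persists[of x ops "Suc i" i'] ii by auto
  moreover have "x \<in> \<sigma>" using facet x unfolding is_facet_def by auto
  ultimately show False using new_simplex_vertex_active_or_new[OF v ii(2) \<sigma>] by blast
qed

section \<open>The stream of the active small coning construction\<close>

lemma concat_blocks_inactive_before_addition: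
  fixes a b :: "nat \<Rightarrow> 'v set list"
  assumes later: "\<And>i i' \<tau> \<sigma>. i < i' \<Longrightarrow> i' < m \<Longrightarrow> \<tau> \<in> set (b i) \<Longrightarrow> \<sigma> \<in> set (a i') \<Longrightarrow>
      P \<tau> \<sigma>"
    and xs: "xs = concat (map (\<lambda>i. map LAdd (a i) @ map LInact (b i)) [0..<m])"
    and p: "p < p'" "p' < length xs" "xs ! p = LInact \<tau>" "xs ! p' = LAdd \<sigma>"
  shows "P \<tau> \<sigma>"
  using later xs p
proof (induction m arbitrary: xs p p')
  case 0
  then show ?case by simp
next
  case (Suc m)
  define ys where "ys = concat (map (\<lambda>i. map LAdd (a i) @ map LInact (b i)) [0..<m])"
  define B where "B = map LAdd (a m) @ map LInact (b m)"
  have xs: "xs = ys @ B" using Suc.prems(2) unfolding ys_def B_def by simp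
  show ?case
  proof (cases "p' < length ys")
    case True
    then show ?thesis
      using Suc.IH[OF _ ys_def, of p p'] Suc.prems(1,3-6) xs by (simp add: nth_append)
  next
    case False
    have "B ! (p' - length ys) = LAdd \<sigma>" "p' - length ys < length B"
      using Suc.prems(4,6) False xs by (auto simp: nth_append)
    then have \<sigma>_in: "p' - length ys < length (a m)" "\<sigma> \<in> set (a m)"
      unfolding B_def by (auto simp: nth_append split: if_splits)
    show ?thesis
    proof (cases "p < length ys")
      case True
      then have "LInact \<tau> \<in> set ys" using Suc.prems(5) xs by (metis nth_append nth_mem)
      then obtain i where "i < m" "\<tau> \<in> set (b i)" unfolding ys_def by auto
      then show ?thesis using Suc.prems(1)[of i m] \<sigma>_in by simp
    next
      case False
      have "B ! (p - length ys) = LInact \<tau>"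
        using Suc.prems(3,5) False xs by (auto simp: nth_append)
      then have "p - length ys \<ge> length (a m)" unfolding B_def
        by (auto simp: nth_append split: if_splits)
      then show ?thesis using \<sigma>_in Suc.prems(3) False by simp
    qed
  qed
qed

lemma labelled_stream_inactive_not_facet_of_later:
  fixes ops :: "'v tower_op list" and ls :: "'v lelem list"
  assumes "valid_tower ops" "labelled_stream ops ls"
    and "p < p'" "p' < length ls" "ls ! p = LInact \<tau>" "ls ! p' = LAdd \<sigma>"
  shows "\<not> is_facet \<tau> \<sigma>"
proof -
  obtain adds inacts :: "nat \<Rightarrow> 'v set list" where
    blocks: "\<forall>i < length ops. set (adds i) = Khat ops (Suc i) - Khat ops i \<and>
                              set (inacts i) = newly_inactive ops i"
    and ls: "ls = concat (map (\<lambda>i. map LAdd (adds i) @ map LInact (inacts i)) [0..<length ops])"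
    using assms(2) unfolding labelled_stream_def by blast
  show ?thesis
    by (rule concat_blocks_inactive_before_addition[OF _ ls assms(3-6)])
      (use newly_inactive_not_facet_of_later[OF assms(1)] blocks in auto)
qed

lemma stream_of_streaming_input:
  assumes str: "stream_of ls str"
    and no_later_coface: "\<And>p p' \<tau> \<sigma>. p < p' \<Longrightarrow> p' < length ls \<Longrightarrow> ls ! p = LInact \<tau> \<Longrightarrow>
      ls ! p' = LAdd \<sigma> \<Longrightarrow> \<not> is_facet \<tau> \<sigma>"
  shows "streaming_input (boundary ls) str"
proof
  have len: "length str = length ls" using str unfolding stream_of_def by blast
  have addition: "\<exists>fs. str ! p = ADDITION p fs \<and> set fs = boundary ls p"
    if p: "p < length ls" "ls ! p = LAdd \<sigma>" for p \<sigma>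
  proof -
    have "boundary ls p = {q. q < length ls \<and> (\<exists>\<tau>. ls ! q = LAdd \<tau> \<and> is_facet \<tau> \<sigma>)}"
      unfolding boundary_def using p by auto
    moreover obtain fs where
      "str ! p = ADDITION p fs"
      "set fs = {q. q < length ls \<and> (\<exists>\<tau>. ls ! q = LAdd \<tau> \<and> is_facet \<tau> \<sigma>)}"
      using str p unfolding stream_of_def by blast
    ultimately show ?thesis by auto
  qed
  have inactive: "\<exists>q. ls ! q = LAdd \<sigma> \<and> str ! p = INACTIVE q"
    if "p < length ls" "ls ! p = LInact \<sigma>" for p \<sigma>
    using str that unfolding stream_of_def by blast
  show "(\<exists>fs. str ! p = ADDITION p fs \<and> set fs = boundary ls p) \<or>
      (\<exists>q. str ! p = INACTIVE q \<and> boundary ls p = {})"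
    if "p < length str" for p
  proof (cases "ls ! p")
    case (LAdd \<sigma>)
    then show ?thesis using that len addition by auto
  next
    case (LInact \<sigma>)
    then have "boundary ls p = {}" unfolding boundary_def by auto
    then show ?thesis using that len inactive LInact by auto
  qed
  show "q \<notin> set fs"
    if pp': "p < p'" "p' < length str" and elems: "str ! p = INACTIVE q" "str ! p' = ADDITION p' fs"
    for p p' q fs
  proof -
    have lt: "p < length ls" "p' < length ls" using pp' len by auto
    obtain \<tau> where \<tau>: "ls ! p = LInact \<tau>"
      using elems(1) addition[OF lt(1)] by (cases "ls ! p") auto
    obtain \<sigma> where \<sigma>: "ls ! p' = LAdd \<sigma>"
      using elems(2) inactive[OF lt(2)] by (cases "ls ! p'") auto
    obtain fs' where "str ! p' = ADDITION p' fs'" "set fs' = boundary ls p'"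
      using addition[OF lt(2) \<sigma>] by blast
    moreover obtain q' where "ls ! q' = LAdd \<tau>" "str ! p = INACTIVE q'"
      using inactive[OF lt(1) \<tau>] by blast
    ultimately show ?thesis
      using elems no_later_coface[OF pp'(1) lt(2) \<tau> \<sigma>] \<sigma> unfolding boundary_def by auto
  qed
qed

theorem proposition17:
  fixes ops :: "'v tower_op list" and ls :: "'v lelem list" and str :: "selem list"
  assumes "valid_tower ops"
    and "labelled_stream ops ls"
    and "stream_of ls str"
  shows "\<exists>R. is_reduction (length ls) (boundary ls) R \<and>
             set (run_algorithm str) = pivot_pairs (length ls) R"
proof -
  interpret streaming_input "boundary ls" str
    by (rule stream_of_streaming_input[OF assms(3)])
      (rule labelled_stream_inactive_not_facet_of_later[OF assms(1,2)])
  have "length str = length ls" using assms(3) unfolding stream_of_def by blast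
  then show ?thesis using reduced_is_reduction run_algorithm_pivot_pairs by auto
qed

end
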